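(* For all positive integers $r,s,k$ with $1\le r,s\le k$, $$\sum_{n\ge0}\mathrm{GF}\big(\mathcal A_{2n+1}^{(k)}(r\to s);w_{AV}\big)x^{2n}=\begin{cases}(-1)^{r+s+1}V_rV_s\dfrac{xQ_{2r-2}(x)\,T_{AV}^{s-1}R_{AV}^{(k-s+1)}Q_{2k+1-2s}(x)}{Q_{2k}(x)},&r<s,\\[2mm] V_r-V_r^2\dfrac{xQ_{2r-2}(x)\,T_{AV}^{r-1}R_{AV}^{(k-r+1)}Q_{2k+1-2r}(x)}{Q_{2k}(x)},&r=s,\\[2mm] (-1)^{r+s+1}V_rV_s\dfrac{xQ_{2s-2}(x)\,T_{AV}^{r-1}R_{AV}^{(k-r+1)}Q_{2k+1-2r}(x)}{Q_{2k}(x)},&r>s,\end{cases}$$ and $$\sum_{n\ge0}\mathrm{GF}\big(\mathcal A_{2n+2}^{(k)}(r\to s);w_{AV}\big)x^{2n+1}=\begin{cases}(-1)^{r+s+1}V_rA_s\dfrac{xQ_{2r-2}(x)\,T_{AV}^{s}Q_{2k-2s}(x)}{Q_{2k}(x)},&r\le s,\\[2mm] (-1)^{r+s+1}V_rA_s\dfrac{xQ_{2s-1}(x)\,T_{AV}^{r-1}R_{AV}^{(k-r+1)}Q_{2k+1-2r}(x)}{Q_{2k}(x)},&r>s.\end{cases}$$ Here $T_{AV}^{a}R_{AV}^{(b)}Q(x)$ means: first apply $R_{AV}^{(b)}$ to $Q(x)$, then apply $T_{AV}^{a}$.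
   Context: $\mathcal A_n^{(k)}(r\to s)$ is the set of integer sequences $(a_1,\dots,a_n)$ with $a_1=r$, $a_n=s$, $1\le a_i\le k$, and $a_1\le a_2\ge a_3\le a_4\ge\cdots$ (i.e. $a_{2j-1}\le a_{2j}$, $a_{2j}\ge a_{2j+1}$ whenever defined). Let $A_1,A_2,\dots,V_1,V_2,\dots$ be indeterminates; the weight of a sequence is $w_{AV}(a_1,\dots,a_n)=\prod_{i=1}^{\lfloor n/2\rfloor}A_{a_{2i}}\prod_{i=1}^{\lceil n/2\rceil}V_{a_{2i-1}}$, and $\mathrm{GF}(\mathcal O;w)=\sum_{t\in\mathcal O}w(t)$. Polynomials $Q_n(x)$: $Q_0=1$, $Q_1=V_1x$, and for $n\ge1$, $Q_{n+1}(x)=V_{(n+2)/2}\,xQ_n(x)-Q_{n-1}(x)$ if $n$ is even, $Q_{n+1}(x)=A_{(n+1)/2}\,xQ_n(x)-Q_{n-1}(x)$ if $n$ is odd. $T_{AV}$ replaces each $A_i$ by $A_{i+1}$ and each $V_i$ by $V_{i+1}$; $R_{AV}^{(j)}$ replaces each $A_i$ by $V_{j+1-i}$ and each $V_i$ by $A_{j+1-i}$. *)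

theory Defs
  imports "HOL-Computational_Algebra.Computational_Algebra"
begin

(* The indeterminates A_1, A_2, ..., V_1, V_2, ... are modelled by arbitrary
   families A V :: nat => 'a in an arbitrary commutative ring 'a (index 0 unused). *)

(* Alternating sequences A_n^(k)(r -> s), as lists; xs ! (i-1) is a_i. *)
definition altseq :: "nat \<Rightarrow> nat \<Rightarrow> nat \<Rightarrow> nat \<Rightarrow> nat list set" where
  "altseq k n r s = {xs. length xs = n \<and> n \<ge> 1 \<and> xs ! 0 = r \<and> xs ! (n - 1) = s
      \<and> (\<forall>i<n. 1 \<le> xs ! i \<and> xs ! i \<le> k)
      \<and> (\<forall>j. 1 \<le> j \<longrightarrow> 2 * j \<le> n \<longrightarrow> xs ! (2*j - 2) \<le> xs ! (2*j - 1))
      \<and> (\<forall>j. 1 \<le> j \<longrightarrow> 2 * j + 1 \<le> n \<longrightarrow> xs ! (2*j - 1) \<ge> xs ! (2*j))}"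

definition wAV :: "(nat \<Rightarrow> 'a::comm_ring_1) \<Rightarrow> (nat \<Rightarrow> 'a) \<Rightarrow> nat list \<Rightarrow> 'a" where
  "wAV A V xs = (\<Prod>i=1..length xs div 2. A (xs ! (2*i - 1)))
              * (\<Prod>i=1..(length xs + 1) div 2. V (xs ! (2*i - 2)))"

definition GF :: "nat list set \<Rightarrow> (nat list \<Rightarrow> 'a::comm_ring_1) \<Rightarrow> 'a" where
  "GF S w = (\<Sum>t\<in>S. w t)"

fun Qp :: "(nat \<Rightarrow> 'a::comm_ring_1) \<Rightarrow> (nat \<Rightarrow> 'a) \<Rightarrow> nat \<Rightarrow> 'a poly" where
  "Qp A V 0 = 1"
| "Qp A V (Suc 0) = [:0, V 1:]"
| "Qp A V (Suc (Suc n)) =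
     smult (if even (Suc n) then V ((Suc n + 2) div 2) else A ((Suc n + 1) div 2))
       ([:0, 1:] * Qp A V (Suc n)) - Qp A V n"

(* T_AV^a Q_m : substitute A_i -> A_{i+a}, V_i -> V_{i+a} *)
definition QT :: "nat \<Rightarrow> (nat \<Rightarrow> 'a::comm_ring_1) \<Rightarrow> (nat \<Rightarrow> 'a) \<Rightarrow> nat \<Rightarrow> 'a poly" where
  "QT a A V m = Qp (\<lambda>i. A (i + a)) (\<lambda>i. V (i + a)) m"

(* T_AV^a R_AV^(j) Q_m : first A_i -> V_{j+1-i}, V_i -> A_{j+1-i}, then shift by a,
   i.e. A_i -> V_{j+1-i+a}, V_i -> A_{j+1-i+a}.  (Only indices i <= j occur
   in the uses below, so the truncated subtraction is harmless.) *)
definition QTR :: "nat \<Rightarrow> nat \<Rightarrow> (nat \<Rightarrow> 'a::comm_ring_1) \<Rightarrow> (nat \<Rightarrow> 'a) \<Rightarrow> nat \<Rightarrow> 'a poly" where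
  "QTR a j A V m = Qp (\<lambda>i. V (j + 1 - i + a)) (\<lambda>i. A (j + 1 - i + a)) m"

end

(* Splitting off the last entry of a sequence gives a linear system for the generating functions
   F_s (odd length) and G_t (even length) of the sequences ending in s resp. t:
     G_t = x A_t (F_1 + ... + F_t),    F_s = [r = s] V_r + x V_s (G_s + ... + G_k),
   and this system has a unique power series solution. Q_2k is the continuant of V_1 x, A_1 x,
   V_2 x, ..., A_k x, i.e. the determinant of the tridiagonal matrix with these diagonal entries and
   off-diagonal entries -1. Up to the factor (-1)^(r+s+1) V_r and a factor A_s x resp. V_s x, the
   claimed numerators are the entries of column 2r-1 of its adjugate. The three-term recurrence of
   that column makes the partial sums of the numerators telescope, so the numerators solve the
   system multiplied by Q_2k. *)

theory Submission
  imports Defs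
begin

section \<open>Continuants\<close>

fun continuant :: "(nat \<Rightarrow> 'a::comm_ring_1) \<Rightarrow> nat \<Rightarrow> 'a" where
  "continuant c 0 = 1"
| "continuant c (Suc 0) = c 1"
| "continuant c (Suc (Suc n)) = c (Suc (Suc n)) * continuant c (Suc n) - continuant c n"

lemma continuant_cong:
  "(\<And>i. 1 \<le> i \<Longrightarrow> i \<le> n \<Longrightarrow> c i = d i) \<Longrightarrow> continuant c n = continuant d n"
  by (induction c n rule: continuant.induct) auto

lemma continuant_Suc_Suc_left:
  "continuant c (Suc (Suc n)) =
     c 1 * continuant (\<lambda>i. c (i + 1)) (Suc n) - continuant (\<lambda>i. c (i + 2)) n"
proof (induction n rule: less_induct)
  case (less n)
  show ?case
  proof (cases "n \<ge> 2")
    case True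
    then obtain j where n: "n = Suc (Suc j)" by (metis add_2_eq_Suc le_Suc_ex)
    have IH1: "continuant c (Suc n) =
          c 1 * continuant (\<lambda>i. c (i + 1)) n - continuant (\<lambda>i. c (i + 2)) (Suc j)"
      and IH2: "continuant c n =
          c 1 * continuant (\<lambda>i. c (i + 1)) (Suc j) - continuant (\<lambda>i. c (i + 2)) j"
      using less[of "Suc j"] less[of j] by (simp_all add: n)
    have "continuant (\<lambda>i. c (i + 1)) (Suc n) =
        c (Suc (Suc n)) * continuant (\<lambda>i. c (i + 1)) n - continuant (\<lambda>i. c (i + 1)) (Suc j)"
      and "continuant (\<lambda>i. c (i + 2)) n =
        c (Suc (Suc n)) * continuant (\<lambda>i. c (i + 2)) (Suc j) - continuant (\<lambda>i. c (i + 2)) j"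
      by (simp_all add: n)
    then show ?thesis
      by (simp only: continuant.simps(3)[of c n] IH1 IH2) (simp add: algebra_simps)
  next
    case False
    then consider "n = 0" | "n = 1" by linarith
    then show ?thesis by cases (simp_all add: algebra_simps)
  qed
qed

lemma continuant_reverse: "continuant (\<lambda>i. c (n + 1 - i)) n = continuant c n"
proof (induction n arbitrary: c rule: less_induct)
  case (less n)
  show ?case
  proof (cases "n \<ge> 2")
    case True
    then obtain j where n: "n = Suc (Suc j)" by (metis add_2_eq_Suc le_Suc_ex)
    have "continuant (\<lambda>i. c (n + 1 - i)) (Suc j) = continuant (\<lambda>i. c (Suc j + 1 - i + 1)) (Suc j)"
      by (rule continuant_cong) (simp add: n Suc_diff_le)
    also have "\<dots> = continuant (\<lambda>i. c (i + 1)) (Suc j)"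
      using less[of "Suc j" "\<lambda>i. c (i + 1)"] by (simp add: n)
    finally have rev1: "continuant (\<lambda>i. c (n + 1 - i)) (Suc j) = continuant (\<lambda>i. c (i + 1)) (Suc j)" .
    have "continuant (\<lambda>i. c (n + 1 - i)) j = continuant (\<lambda>i. c (j + 1 - i + 2)) j"
      by (rule continuant_cong) (simp add: n Suc_diff_le)
    also have "\<dots> = continuant (\<lambda>i. c (i + 2)) j"
      using less[of j "\<lambda>i. c (i + 2)"] by (simp add: n)
    finally have rev2: "continuant (\<lambda>i. c (n + 1 - i)) j = continuant (\<lambda>i. c (i + 2)) j" .
    have "continuant (\<lambda>i. c (n + 1 - i)) n =
        c 1 * continuant (\<lambda>i. c (n + 1 - i)) (Suc j) - continuant (\<lambda>i. c (n + 1 - i)) j"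
      by (simp add: n)
    also have "\<dots> = c 1 * continuant (\<lambda>i. c (i + 1)) (Suc j) - continuant (\<lambda>i. c (i + 2)) j"
      unfolding rev1 rev2 ..
    also have "\<dots> = continuant c n"
      unfolding n by (rule continuant_Suc_Suc_left[symmetric])
    finally show ?thesis .
  next
    case False
    then consider "n = 0" | "n = 1" by linarith
    then show ?thesis by cases simp_all
  qed
qed

lemma continuant_Suc:
  "1 \<le> p \<Longrightarrow> continuant c (Suc p) = c (Suc p) * continuant c p - continuant c (p - 1)"
  by (cases p) simp_all

definition continuant_tail :: "(nat \<Rightarrow> 'a::comm_ring_1) \<Rightarrow> nat \<Rightarrow> nat \<Rightarrow> 'a" where
  "continuant_tail c n j = continuant (\<lambda>i. c (i + j)) (n - j)"

lemma continuant_tail_step: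
  assumes "j + 2 \<le> n"
  shows "continuant_tail c n j = c (j + 1) * continuant_tail c n (j + 1) - continuant_tail c n (j + 2)"
proof -
  define m where "m = n - j - 2"
  have m: "n - j = Suc (Suc m)" "n - (j + 1) = Suc m" "n - (j + 2) = m"
    using assms by (simp_all add: m_def)
  show ?thesis
    unfolding continuant_tail_def m continuant_Suc_Suc_left[of "\<lambda>i. c (i + j)"]
    by (simp add: ac_simps)
qed

lemma continuant_tail_last: "continuant_tail c n n = 1"
  by (simp add: continuant_tail_def)

lemma continuant_tail_Suc_last: "Suc j = n \<Longrightarrow> continuant_tail c n j = c n"
  by (auto simp: continuant_tail_def)

lemma continuant_split:
  assumes "1 \<le> p" "p < n"
  shows "continuant c n =
    continuant c p * continuant_tail c n p - continuant c (p - 1) * continuant_tail c n (p + 1)"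
proof -
  have "p \<le> n - 1" using assms by simp
  then show ?thesis
  proof (induction p rule: inc_induct)
    case base
    have "n \<ge> 2" using assms by simp
    then obtain j where j: "n = Suc (Suc j)" by (metis add_2_eq_Suc le_Suc_ex)
    show ?case by (simp add: j continuant_tail_def)
  next
    case (step q)
    have K: "continuant c (Suc q) = c (Suc q) * continuant c q - continuant c (q - 1)"
      using continuant_Suc[of q c] step assms by simp
    have T: "continuant_tail c n q = c (Suc q) * continuant_tail c n (Suc q) - continuant_tail c n (q + 2)"
      using continuant_tail_step[of q n c] step by simp
    have "continuant c n = continuant c (Suc q) * continuant_tail c n (Suc q)
        - continuant c q * continuant_tail c n (q + 2)"
      using step by simp
    also have "\<dots> = continuant c q * continuant_tail c n q - continuant c (q - 1) * continuant_tail c n (q + 1)"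
      unfolding K T by (simp add: algebra_simps)
    finally show ?case .
  qed
qed

(* Column p of the adjugate of the tridiagonal matrix with diagonal c 1, ..., c n and all
   off-diagonal entries -1, whose determinant is continuant c n. *)
definition continuant_green :: "(nat \<Rightarrow> 'a::comm_ring_1) \<Rightarrow> nat \<Rightarrow> nat \<Rightarrow> nat \<Rightarrow> 'a" where
  "continuant_green c n p m =
    (if m = 0 \<or> n < m then 0
     else if m \<le> p then continuant c (m - 1) * continuant_tail c n p
     else continuant c (p - 1) * continuant_tail c n m)"

lemma continuant_green_recurrence:
  assumes p: "1 \<le> p" "p < n" and m: "1 \<le> m" "m \<le> n"
  shows "continuant_green c n p (m + 1) + continuant_green c n p (m - 1) =
    c m * continuant_green c n p m - (if m = p then continuant c n else 0)"
proof -
  let ?Y = "continuant_green c n p" and ?K = "continuant c" and ?T = "continuant_tail c n"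
  consider "m < p" | "m = p" | "p < m" by linarith
  then show ?thesis
  proof cases
    case 1
    have Y: "?Y (m + 1) = ?K m * ?T p" "?Y m = ?K (m - 1) * ?T p"
      using 1 m p by (auto simp: continuant_green_def)
    show ?thesis
    proof (cases "m = 1")
      case True
      moreover have "?Y (m - 1) = 0" using True by (simp add: continuant_green_def)
      ultimately show ?thesis using Y 1 by simp
    next
      case False
      then have "?Y (m - 1) = ?K (m - 2) * ?T p" "?K m + ?K (m - 2) = c m * ?K (m - 1)"
        using 1 m continuant_Suc[of "m - 1" c] by (auto simp: continuant_green_def numeral_2_eq_2)
      then have "?Y (m + 1) + ?Y (m - 1) = c m * ?Y m"
        unfolding Y by (metis distrib_right mult.assoc)
      then show ?thesis using 1 by simp
    qed
  next
    case 2
    have Y: "?Y (m + 1) = ?K (p - 1) * ?T (p + 1)" "?Y m = ?K (p - 1) * ?T p"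
      using 2 m p by (auto simp: continuant_green_def)
    show ?thesis
    proof (cases "p = 1")
      case True
      moreover have "?Y (m - 1) = 0" using 2 True by (simp add: continuant_green_def)
      ultimately show ?thesis
        using Y 2 continuant_split[OF p, of c] by (simp add: algebra_simps)
    next
      case False
      then have "?Y (m - 1) = ?K (p - 2) * ?T p" "?K (p - 2) = c p * ?K (p - 1) - ?K p"
        using 2 p continuant_Suc[of "p - 1" c] by (auto simp: continuant_green_def numeral_2_eq_2)
      then have "?Y (m + 1) + ?Y (m - 1) = c p * ?Y m - (?K p * ?T p - ?K (p - 1) * ?T (p + 1))"
        unfolding Y by (simp add: algebra_simps)
      then show ?thesis
        using 2 continuant_split[OF p, of c] by simp
    qed
  next
    case 3
    have "m - 1 \<le> p \<Longrightarrow> m - 2 = p - 1 \<and> m - 1 = p" using 3 by linarith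
    then have Y: "?Y (m - 1) = ?K (p - 1) * ?T (m - 1)" "?Y m = ?K (p - 1) * ?T m"
      using 3 m p by (auto simp: continuant_green_def)
    show ?thesis
    proof (cases "m = n")
      case True
      then have "?Y (m + 1) = 0" "?T (m - 1) = c m * ?T m"
        using 3 p by (simp_all add: continuant_green_def continuant_tail_last continuant_tail_Suc_last)
      then show ?thesis using Y 3 by simp
    next
      case False
      then have "?Y (m + 1) = ?K (p - 1) * ?T (m + 1)" "?T (m + 1) + ?T (m - 1) = c m * ?T m"
        using 3 m continuant_tail_step[of "m - 1" n c] by (simp_all add: continuant_green_def)
      then have "?Y (m + 1) + ?Y (m - 1) = c m * ?Y m"
        unfolding Y by (metis distrib_left mult.left_commute)
      then show ?thesis using 3 by simp
    qed
  qed
qed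

section \<open>The polynomials Q as continuants\<close>

definition Qp_entry :: "(nat \<Rightarrow> 'a::comm_ring_1) \<Rightarrow> (nat \<Rightarrow> 'a) \<Rightarrow> nat \<Rightarrow> 'a poly" where
  "Qp_entry A V m = [:0, if odd m then V ((m + 1) div 2) else A (m div 2):]"

lemma Qp_entry_odd: "1 \<le> s \<Longrightarrow> Qp_entry A V (2 * s - 1) = [:0, V s:]"
  by (cases s) (simp_all add: Qp_entry_def)

lemma Qp_entry_even: "Qp_entry A V (2 * s) = [:0, A s:]"
  by (simp add: Qp_entry_def)

lemma Qp_eq_continuant: "Qp A V n = continuant (Qp_entry A V) n"
  by (induction A V n rule: Qp.induct) (auto simp: Qp_entry_def)

lemma QT_eq_continuant_tail: "QT s A V (n - 2 * s) = continuant_tail (Qp_entry A V) n (2 * s)"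
  unfolding QT_def Qp_eq_continuant continuant_tail_def
  by (rule continuant_cong) (auto simp: Qp_entry_def ac_simps elim!: oddE evenE)

(* R reverses the order of the entries of Q, so the tail continuant reappears by reversal. *)
lemma QTR_eq_continuant_tail:
  assumes "1 \<le> s" "s \<le> k"
  shows "QTR (s - 1) (k - s + 1) A V (2 * k + 1 - 2 * s) = continuant_tail (Qp_entry A V) (2 * k) (2 * s - 1)"
proof -
  let ?n = "2 * k + 1 - 2 * s"
  have "QTR (s - 1) (k - s + 1) A V ?n = continuant (\<lambda>i. Qp_entry A V (?n + 1 - i + (2 * s - 1))) ?n"
    unfolding QTR_def Qp_eq_continuant
  proof (rule continuant_cong)
    fix i assume i: "1 \<le> i" "i \<le> ?n"
    show "Qp_entry (\<lambda>i. V (k - s + 1 + 1 - i + (s - 1))) (\<lambda>i. A (k - s + 1 + 1 - i + (s - 1))) i =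
        Qp_entry A V (?n + 1 - i + (2 * s - 1))"
    proof (cases "odd i")
      case True
      then obtain j where "i = 2 * j + 1" by (elim oddE)
      with i assms show ?thesis by (simp add: Qp_entry_def flip: diff_mult_distrib2)
    next
      case False
      then obtain j where j: "i = 2 * j" by auto
      with i assms have "j + s \<le> k" "Suc (2 * k) - 2 * j = Suc (2 * (k - j))" by simp_all
      with i j assms show ?thesis by (simp add: Qp_entry_def Suc_diff_le)
    qed
  qed
  also have "\<dots> = continuant_tail (Qp_entry A V) (2 * k) (2 * s - 1)"
    using continuant_reverse[of "\<lambda>i. Qp_entry A V (i + (2 * s - 1))" ?n] assms
    by (simp add: continuant_tail_def)
  finally show ?thesis .
qed

section \<open>Alternating sequences by their last entry\<close>

lemma altseq_iff:
  "xs \<in> altseq k n r s \<longleftrightarrow> length xs = n \<and> 1 \<le> n \<and> xs ! 0 = r \<and> xs ! (n - 1) = s \<and>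
     set xs \<subseteq> {1..k} \<and>
     (\<forall>i. Suc i < n \<longrightarrow> (if even i then xs ! i \<le> xs ! Suc i else xs ! Suc i \<le> xs ! i))"
proof -
  have up: "(\<forall>j. 1 \<le> j \<longrightarrow> 2 * j \<le> n \<longrightarrow> xs ! (2 * j - 2) \<le> xs ! (2 * j - 1)) \<longleftrightarrow>
      (\<forall>i. Suc i < n \<longrightarrow> even i \<longrightarrow> xs ! i \<le> xs ! Suc i)"
  proof (intro iffI allI impI)
    fix i assume "\<forall>j. 1 \<le> j \<longrightarrow> 2 * j \<le> n \<longrightarrow> xs ! (2 * j - 2) \<le> xs ! (2 * j - 1)"
      "Suc i < n" "even i"
    then show "xs ! i \<le> xs ! Suc i" by (auto elim!: evenE dest!: spec[of _ "Suc (i div 2)"])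
  next
    fix j :: nat assume "\<forall>i. Suc i < n \<longrightarrow> even i \<longrightarrow> xs ! i \<le> xs ! Suc i" "1 \<le> j" "2 * j \<le> n"
    then show "xs ! (2 * j - 2) \<le> xs ! (2 * j - 1)"
      by (cases j) (auto dest!: spec[of _ "2 * j - 2"])
  qed
  have down: "(\<forall>j. 1 \<le> j \<longrightarrow> 2 * j + 1 \<le> n \<longrightarrow> xs ! (2 * j - 1) \<ge> xs ! (2 * j)) \<longleftrightarrow>
      (\<forall>i. Suc i < n \<longrightarrow> odd i \<longrightarrow> xs ! Suc i \<le> xs ! i)"
  proof (intro iffI allI impI)
    fix i assume "\<forall>j. 1 \<le> j \<longrightarrow> 2 * j + 1 \<le> n \<longrightarrow> xs ! (2 * j - 1) \<ge> xs ! (2 * j)"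
      "Suc i < n" "odd i"
    then show "xs ! Suc i \<le> xs ! i" by (auto elim!: oddE dest!: spec[of _ "Suc (i div 2)"])
  next
    fix j :: nat assume "\<forall>i. Suc i < n \<longrightarrow> odd i \<longrightarrow> xs ! Suc i \<le> xs ! i" "1 \<le> j" "2 * j + 1 \<le> n"
    then show "xs ! (2 * j) \<le> xs ! (2 * j - 1)"
      by (cases j) (auto dest!: spec[of _ "2 * j - 1"])
  qed
  show ?thesis
    unfolding altseq_def mem_Collect_eq up down
    by (auto simp: in_set_conv_nth subset_iff)
qed

lemma snoc_in_altseq_iff:
  assumes "length xs = n" "1 \<le> n"
  shows "xs @ [a] \<in> altseq k (Suc n) r s \<longleftrightarrow>
    a = s \<and> a \<in> {1..k} \<and> xs \<in> altseq k n r (last xs) \<and>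
    (if even n then a \<le> last xs else last xs \<le> a)"
proof -
  have last: "last xs = xs ! (n - 1)" using assms by (cases xs) (auto simp: last_conv_nth)
  have at_end: "(xs @ [a]) ! (n - 1) = last xs" "(xs @ [a]) ! Suc (n - 1) = a"
    using assms by (simp_all add: nth_append last)
  have "(\<forall>i. Suc i < Suc n \<longrightarrow> (if even i then (xs @ [a]) ! i \<le> (xs @ [a]) ! Suc i
          else (xs @ [a]) ! Suc i \<le> (xs @ [a]) ! i)) \<longleftrightarrow>
        (\<forall>i. Suc i < n \<longrightarrow> (if even i then xs ! i \<le> xs ! Suc i else xs ! Suc i \<le> xs ! i)) \<and>
        (if even n then a \<le> last xs else last xs \<le> a)"
    (is "?L \<longleftrightarrow> ?R \<and> ?last")
  proof
    assume L: ?L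
    have "?R"
    proof (intro allI impI)
      fix i assume "Suc i < n"
      then show "if even i then xs ! i \<le> xs ! Suc i else xs ! Suc i \<le> xs ! i"
        using L[rule_format, of i] assms by (auto simp: nth_append split: if_splits)
    qed
    moreover have "if even (n - 1) then last xs \<le> a else a \<le> last xs"
      using L[rule_format, of "n - 1"] assms unfolding at_end by simp
    then have ?last using assms by (auto split: if_splits)
    ultimately show "?R \<and> ?last" ..
  next
    assume R: "?R \<and> ?last"
    show ?L
    proof (intro allI impI)
      fix i assume "Suc i < Suc n"
      then consider "Suc i < n" | "i = n - 1" by linarith
      then show "if even i then (xs @ [a]) ! i \<le> (xs @ [a]) ! Suc i else (xs @ [a]) ! Suc i \<le> (xs @ [a]) ! i"
        by cases (use R assms in \<open>auto simp: nth_append last\<close>)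
    qed
  qed
  then show ?thesis
    using assms by (auto simp: altseq_iff nth_append last)
qed

lemma last_altseq: "xs \<in> altseq k n r s \<Longrightarrow> last xs = s"
  by (cases xs) (auto simp: altseq_def last_conv_nth)

lemma altseq_end_range: "xs \<in> altseq k n r s \<Longrightarrow> s \<in> {1..k}"
  unfolding altseq_def by (metis (mono_tags, lifting) One_nat_def Suc_le_eq atLeastAtMost_iff
      diff_less mem_Collect_eq zero_less_one)

lemma altseq_Suc:
  assumes "1 \<le> n" "s \<in> {1..k}"
  shows "altseq k (Suc n) r s =
    (\<lambda>xs. xs @ [s]) ` (\<Union>t \<in> (if even n then {s..k} else {1..s}). altseq k n r t)"
proof (intro equalityI subsetI)
  fix ys assume ys: "ys \<in> altseq k (Suc n) r s"
  then have "length ys = Suc n" by (simp add: altseq_def)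
  then obtain xs where ys_eq: "ys = xs @ [last ys]" and len: "length xs = n"
    by (metis append_butlast_last_id length_butlast diff_Suc_1 list.size(3) nat.distinct(1))
  then have "last ys = s" "xs \<in> altseq k n r (last xs)"
    and bound: "if even n then last ys \<le> last xs else last xs \<le> last ys"
    using ys assms snoc_in_altseq_iff[of xs n "last ys" k r s] by auto
  moreover have "last xs \<in> {1..k}" using altseq_end_range \<open>xs \<in> altseq k n r (last xs)\<close> .
  ultimately show "ys \<in> (\<lambda>xs. xs @ [s]) ` (\<Union>t \<in> (if even n then {s..k} else {1..s}). altseq k n r t)"
    using ys_eq by (intro image_eqI[of _ _ xs] UN_I[of "last xs"]) (auto split: if_splits)
next
  fix ys assume "ys \<in> (\<lambda>xs. xs @ [s]) ` (\<Union>t \<in> (if even n then {s..k} else {1..s}). altseq k n r t)"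
  then obtain xs t where "ys = xs @ [s]" "xs \<in> altseq k n r t" "t \<in> (if even n then {s..k} else {1..s})"
    by auto
  moreover from \<open>xs \<in> altseq k n r t\<close> have "length xs = n" "last xs = t"
    by (simp add: altseq_def, rule last_altseq)
  ultimately show "ys \<in> altseq k (Suc n) r s"
    using assms by (auto simp: snoc_in_altseq_iff split: if_splits)
qed

lemma finite_altseq: "finite (altseq k n r s)"
proof (rule finite_subset)
  show "altseq k n r s \<subseteq> {xs. set xs \<subseteq> {1..k} \<and> length xs = n}"
    using altseq_iff[of _ k n r s] by blast
  show "finite {xs. set xs \<subseteq> {1..k} \<and> length xs = n}"
    by (rule finite_lists_length_eq) simp
qed

lemma GF_altseq_one:
  assumes "r \<in> {1..k}"
  shows "GF (altseq k 1 r s) (wAV A V) = (if r = s then V r else 0)"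
proof -
  have "altseq k 1 r s = (if r = s then {[r]} else {})"
    using assms unfolding altseq_def by (auto simp: length_Suc_conv)
  then show ?thesis by (simp add: GF_def wAV_def)
qed

lemma wAV_snoc:
  assumes "length xs = n"
  shows "wAV A V (xs @ [a]) = wAV A V xs * (if even n then V a else A a)"
proof -
  have A: "(\<Prod>i=1..m. A ((xs @ [a]) ! (2 * i - 1))) = (\<Prod>i=1..m. A (xs ! (2 * i - 1)))"
    and V: "(\<Prod>i=1..m. V ((xs @ [a]) ! (2 * i - 2))) = (\<Prod>i=1..m. V (xs ! (2 * i - 2)))"
    if "2 * m \<le> n" for m
    using that assms by (auto intro!: prod.cong simp: nth_append)
  show ?thesis
  proof (cases "even n")
    case True
    then obtain m where m: "n = 2 * m" by auto
    have "wAV A V (xs @ [a]) =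
        (\<Prod>i=1..m. A ((xs @ [a]) ! (2 * i - 1))) * (\<Prod>i=1..Suc m. V ((xs @ [a]) ! (2 * i - 2)))"
      by (simp add: wAV_def assms m)
    also have "\<dots> = (\<Prod>i=1..m. A (xs ! (2 * i - 1))) * (\<Prod>i=1..m. V (xs ! (2 * i - 2))) * V a"
      using A[of m] V[of m] assms by (simp add: m nth_append)
    also have "\<dots> = wAV A V xs * V a"
      by (simp add: wAV_def assms m)
    finally show ?thesis using True by simp
  next
    case False
    then obtain m where m: "n = 2 * m + 1" using oddE by blast
    have "wAV A V (xs @ [a]) =
        (\<Prod>i=1..Suc m. A ((xs @ [a]) ! (2 * i - 1))) * (\<Prod>i=1..Suc m. V ((xs @ [a]) ! (2 * i - 2)))"
      by (simp add: wAV_def assms m)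
    also have "\<dots> = (\<Prod>i=1..m. A (xs ! (2 * i - 1))) * (\<Prod>i=1..Suc m. V (xs ! (2 * i - 2))) * A a"
      using A[of m] V[of m] assms by (simp add: m nth_append del: One_nat_def)
    also have "\<dots> = wAV A V xs * A a"
      by (simp add: wAV_def assms m)
    finally show ?thesis using False by simp
  qed
qed

lemma GF_altseq_Suc:
  assumes "1 \<le> n" "s \<in> {1..k}"
  shows "GF (altseq k (Suc n) r s) (wAV A V) = (if even n then V s else A s) *
          (\<Sum>t \<in> (if even n then {s..k} else {1..s}). GF (altseq k n r t) (wAV A V))"
proof -
  define I where "I = (if even n then {s..k} else {1..s})"
  have disjoint: "altseq k n r t \<inter> altseq k n r t' = {}" if "t \<noteq> t'" for t t'
    using that last_altseq by blast
  have "GF (altseq k (Suc n) r s) (wAV A V) = (\<Sum>xs \<in> (\<Union>t \<in> I. altseq k n r t). wAV A V (xs @ [s]))"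
    unfolding GF_def altseq_Suc[OF assms] I_def[symmetric]
    by (rule sum.reindex_cong[where l = "\<lambda>xs. xs @ [s]"]) (auto simp: inj_on_def)
  also have "\<dots> = (\<Sum>t \<in> I. \<Sum>xs \<in> altseq k n r t. wAV A V (xs @ [s]))"
    by (rule sum.UNION_disjoint) (auto simp: I_def finite_altseq disjoint)
  also have "\<dots> = (\<Sum>t \<in> I. \<Sum>xs \<in> altseq k n r t. (if even n then V s else A s) * wAV A V xs)"
    by (intro sum.cong refl) (simp add: wAV_snoc altseq_def mult.commute)
  finally show ?thesis
    by (simp add: I_def GF_def sum_distrib_left)
qed

section \<open>The numerators solve the system\<close>

lemma fps_of_poly_linear: "fps_of_poly [:0, a:] = fps_X * fps_const (a :: 'a::comm_ring_1)"
  by (simp add: fps_of_poly_pCons mult.commute)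

context
  fixes A V :: "nat \<Rightarrow> 'a::comm_ring_1" and k r :: nat
begin

definition odd_numerator :: "nat \<Rightarrow> 'a poly" where
  "odd_numerator s =
    (if r < s then
       smult ((-1)^(r+s+1) * V r * V s) ([:0,1:] * Qp A V (2*r-2) * QTR (s-1) (k-s+1) A V (2*k+1-2*s))
     else if r = s then
       smult (V r) (Qp A V (2*k))
         - smult ((V r)^2) ([:0,1:] * Qp A V (2*r-2) * QTR (r-1) (k-r+1) A V (2*k+1-2*r))
     else
       smult ((-1)^(r+s+1) * V r * V s) ([:0,1:] * Qp A V (2*s-2) * QTR (r-1) (k-r+1) A V (2*k+1-2*r)))"

definition even_numerator :: "nat \<Rightarrow> 'a poly" where
  "even_numerator s =
    (if r \<le> s then
       smult ((-1)^(r+s+1) * V r * A s) ([:0,1:] * Qp A V (2*r-2) * QT s A V (2*k-2*s))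
     else
       smult ((-1)^(r+s+1) * V r * A s) ([:0,1:] * Qp A V (2*s-1) * QTR (r-1) (k-r+1) A V (2*k+1-2*r)))"

definition odd_prefix_sum :: "nat \<Rightarrow> 'a poly" where
  "odd_prefix_sum t =
    smult ((-1)^(r+t+1) * V r) (continuant_green (Qp_entry A V) (2*k) (2*r-1) (2*t))"

definition even_suffix_sum :: "nat \<Rightarrow> 'a poly" where
  "even_suffix_sum s =
    smult ((-1)^(r+s+1) * V r) (continuant_green (Qp_entry A V) (2*k) (2*r-1) (2*s-1))"

context
  assumes r: "1 \<le> r" "r \<le> k"
begin

lemma Qp_green_even:
  assumes "1 \<le> s" "s \<le> k"
  shows "continuant_green (Qp_entry A V) (2*k) (2*r-1) (2*s) =
    (if r \<le> s then Qp A V (2*r-2) * QT s A V (2*k-2*s)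
     else Qp A V (2*s-1) * QTR (r-1) (k-r+1) A V (2*k+1-2*r))"
proof -
  have "\<not> 2*s \<le> 2*r-1 \<longleftrightarrow> r \<le> s" "2*r-1-1 = 2*r-2" using r by auto
  then show ?thesis
    unfolding Qp_eq_continuant QT_eq_continuant_tail QTR_eq_continuant_tail[OF r]
    using assms r by (auto simp: continuant_green_def)
qed

lemma Qp_green_odd:
  assumes "1 \<le> s" "s \<le> k"
  shows "continuant_green (Qp_entry A V) (2*k) (2*r-1) (2*s-1) =
    (if r < s then Qp A V (2*r-2) * QTR (s-1) (k-s+1) A V (2*k+1-2*s)
     else Qp A V (2*s-2) * QTR (r-1) (k-r+1) A V (2*k+1-2*r))"
proof -
  have "\<not> 2*s-1 \<le> 2*r-1 \<longleftrightarrow> r < s" "2*r-1-1 = 2*r-2" "2*s-1-1 = 2*s-2" using r assms by auto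
  then show ?thesis
    unfolding Qp_eq_continuant QTR_eq_continuant_tail[OF r] QTR_eq_continuant_tail[OF assms]
    using assms r by (auto simp: continuant_green_def)
qed

lemma even_numerator_eq_prefix_sum:
  assumes "1 \<le> s" "s \<le> k"
  shows "even_numerator s = [:0, A s:] * odd_prefix_sum s"
  using Qp_green_even[OF assms]
  by (simp add: even_numerator_def odd_prefix_sum_def ac_simps)

lemma odd_numerator_eq_suffix_sum:
  assumes "1 \<le> s" "s \<le> k"
  shows "odd_numerator s =
    (if r = s then smult (V r) (Qp A V (2*k)) else 0) + [:0, V s:] * even_suffix_sum s"
  using Qp_green_odd[OF assms]
  by (simp add: odd_numerator_def even_suffix_sum_def ac_simps power2_eq_square)

lemma Qp_green_recurrence:
  assumes "1 \<le> m" "m \<le> 2*k"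
  shows "continuant_green (Qp_entry A V) (2*k) (2*r-1) (m + 1) + continuant_green (Qp_entry A V) (2*k) (2*r-1) (m - 1) =
    Qp_entry A V m * continuant_green (Qp_entry A V) (2*k) (2*r-1) m - (if m = 2*r-1 then Qp A V (2*k) else 0)"
  using continuant_green_recurrence[of "2*r-1" "2*k" m "Qp_entry A V"] assms r
  by (simp add: Qp_eq_continuant)

lemma odd_numerator_telescope:
  assumes s: "1 \<le> s" "s \<le> k"
  shows "odd_numerator s = odd_prefix_sum s - odd_prefix_sum (s - 1)"
proof -
  define Y where "Y = continuant_green (Qp_entry A V) (2*k) (2*r-1)"
  define X where "X = [:0, V s:]"
  define c where "c = (-1::'a) ^ (r + s + 1) * V r"
  have "2*s - 1 + 1 = 2*s" "2*s - 1 - 1 = 2*(s - 1)" "2*s - 1 = 2*r - 1 \<longleftrightarrow> s = r" using s by auto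
  then have rec: "Y (2*s) + Y (2*(s-1)) = X * Y (2*s-1) - (if s = r then Qp A V (2*k) else 0)"
    using Qp_green_recurrence[of "2*s-1"] s Qp_entry_odd[OF s(1), of A V] by (simp add: X_def Y_def)
  have "(-1::'a) ^ (r + (s - 1) + 1) = - ((-1) ^ (r + s + 1))" using s by (cases s) simp_all
  then have "odd_prefix_sum s - odd_prefix_sum (s - 1) = smult c (Y (2*s) + Y (2*(s-1)))"
    by (simp add: odd_prefix_sum_def Y_def c_def smult_add_right)
  also have "\<dots> = X * smult c (Y (2*s-1)) - smult c (if s = r then Qp A V (2*k) else 0)"
    unfolding rec by (simp only: smult_diff_right mult_smult_right)
  also have "\<dots> = odd_numerator s"
    unfolding odd_numerator_eq_suffix_sum[OF s] by (simp add: X_def Y_def c_def even_suffix_sum_def)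
  finally show ?thesis ..
qed

lemma even_numerator_telescope:
  assumes s: "1 \<le> s" "s \<le> k"
  shows "even_numerator s = even_suffix_sum s - even_suffix_sum (s + 1)"
proof -
  define Y where "Y = continuant_green (Qp_entry A V) (2*k) (2*r-1)"
  define X where "X = [:0, A s:]"
  define c where "c = (-1::'a) ^ (r + s + 1) * V r"
  have "2*s \<noteq> 2*r - 1" using r by presburger
  moreover have "2*(s + 1) - 1 = 2*s + 1" by simp
  ultimately have rec: "Y (2*(s + 1) - 1) + Y (2*s - 1) = X * Y (2*s)"
    using Qp_green_recurrence[of "2*s"] s by (simp add: Qp_entry_even X_def Y_def)
  have "even_suffix_sum s - even_suffix_sum (s + 1) = smult c (Y (2*(s + 1) - 1) + Y (2*s - 1))"
    by (simp add: even_suffix_sum_def Y_def c_def smult_add_right)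
  also have "\<dots> = X * smult c (Y (2*s))"
    unfolding rec by (simp only: mult_smult_right)
  also have "\<dots> = even_numerator s"
    unfolding even_numerator_eq_prefix_sum[OF s] by (simp add: X_def Y_def c_def odd_prefix_sum_def)
  finally show ?thesis ..
qed

lemma sum_odd_numerator: "t \<le> k \<Longrightarrow> (\<Sum>u=1..t. odd_numerator u) = odd_prefix_sum t"
proof (induction t)
  case 0
  then show ?case by (simp add: odd_prefix_sum_def continuant_green_def)
next
  case (Suc t)
  then show ?case using odd_numerator_telescope[of "Suc t"] by simp
qed

lemma sum_even_numerator:
  assumes "1 \<le> s" "s \<le> k + 1"
  shows "(\<Sum>t=s..k. even_numerator t) = even_suffix_sum s"
  using assms(2,1)
proof (induction s rule: inc_induct)
  case base
  then show ?case by (simp add: even_suffix_sum_def continuant_green_def)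
next
  case (step s)
  then have "(\<Sum>t=s..k. even_numerator t) = even_numerator s + (\<Sum>t=Suc s..k. even_numerator t)"
    by (simp add: sum.atLeast_Suc_atMost)
  with step show ?case using even_numerator_telescope[of s] by simp
qed

lemma even_numerator_system:
  assumes "t \<in> {1..k}"
  shows "fps_of_poly (even_numerator t) =
    fps_X * fps_const (A t) * (\<Sum>u=1..t. fps_of_poly (odd_numerator u))"
proof -
  have "even_numerator t = [:0, A t:] * (\<Sum>u=1..t. odd_numerator u)"
    using even_numerator_eq_prefix_sum[of t] sum_odd_numerator[of t] assms by simp
  then show ?thesis by (simp only: fps_of_poly_mult fps_of_poly_sum fps_of_poly_linear)
qed

lemma odd_numerator_system:
  assumes "s \<in> {1..k}"
  shows "fps_of_poly (odd_numerator s) = fps_const (if r = s then V r else 0) * fps_of_poly (Qp A V (2*k)) +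
    fps_X * fps_const (V s) * (\<Sum>t=s..k. fps_of_poly (even_numerator t))"
proof -
  have eq: "odd_numerator s =
      (if r = s then smult (V r) (Qp A V (2*k)) else 0) + [:0, V s:] * (\<Sum>t=s..k. even_numerator t)"
    using odd_numerator_eq_suffix_sum[of s] sum_even_numerator[of s] assms by simp
  show ?thesis
    unfolding eq fps_of_poly_add fps_of_poly_mult fps_of_poly_sum fps_of_poly_linear
    by (simp add: fps_of_poly_smult)
qed

end

end

section \<open>Generating functions\<close>

definition odd_length_series :: "nat \<Rightarrow> nat \<Rightarrow> (nat \<Rightarrow> 'a::comm_ring_1) \<Rightarrow> (nat \<Rightarrow> 'a) \<Rightarrow> nat \<Rightarrow> 'a fps" where
  "odd_length_series k r A V s = Abs_fps (\<lambda>m. if even m then GF (altseq k (m + 1) r s) (wAV A V) else 0)"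

definition even_length_series :: "nat \<Rightarrow> nat \<Rightarrow> (nat \<Rightarrow> 'a::comm_ring_1) \<Rightarrow> (nat \<Rightarrow> 'a) \<Rightarrow> nat \<Rightarrow> 'a fps" where
  "even_length_series k r A V s = Abs_fps (\<lambda>m. if odd m then GF (altseq k (m + 1) r s) (wAV A V) else 0)"

lemma even_length_series_system:
  assumes "t \<in> {1..k}"
  shows "even_length_series k r A V t = fps_X * fps_const (A t) * (\<Sum>u=1..t. odd_length_series k r A V u)"
proof (rule fps_ext)
  fix m
  show "even_length_series k r A V t $ m = (fps_X * fps_const (A t) * (\<Sum>u=1..t. odd_length_series k r A V u)) $ m"
  proof (cases m)
    case (Suc j)
    then show ?thesis
      using GF_altseq_Suc[of "Suc j" t k r A V] assms
      by (simp add: even_length_series_def odd_length_series_def mult.assoc fps_sum_nth)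
  qed (simp add: even_length_series_def mult.assoc)
qed

lemma odd_length_series_system:
  assumes "r \<in> {1..k}" "s \<in> {1..k}"
  shows "odd_length_series k r A V s =
    fps_const (if r = s then V r else 0) + fps_X * fps_const (V s) * (\<Sum>t=s..k. even_length_series k r A V t)"
proof (rule fps_ext)
  fix m
  show "odd_length_series k r A V s $ m = (fps_const (if r = s then V r else 0)
      + fps_X * fps_const (V s) * (\<Sum>t=s..k. even_length_series k r A V t)) $ m"
  proof (cases m)
    case 0
    then show ?thesis using GF_altseq_one[OF assms(1), of s A V]
      by (simp add: odd_length_series_def mult.assoc)
  next
    case (Suc j)
    then show ?thesis
      using GF_altseq_Suc[of "Suc j" s k r A V] assms
      by (simp add: even_length_series_def odd_length_series_def mult.assoc fps_sum_nth)
  qed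
qed

lemma fps_system_unique:
  fixes f g f' g' b :: "nat \<Rightarrow> 'a::comm_ring_1 fps"
  assumes g: "\<And>t. t \<in> {1..k} \<Longrightarrow> g t = fps_X * fps_const (A t) * (\<Sum>u=1..t. f u)"
    and f: "\<And>s. s \<in> {1..k} \<Longrightarrow> f s = b s + fps_X * fps_const (V s) * (\<Sum>t=s..k. g t)"
    and g': "\<And>t. t \<in> {1..k} \<Longrightarrow> g' t = fps_X * fps_const (A t) * (\<Sum>u=1..t. f' u)"
    and f': "\<And>s. s \<in> {1..k} \<Longrightarrow> f' s = b s + fps_X * fps_const (V s) * (\<Sum>t=s..k. g' t)"
    and s: "s \<in> {1..k}"
  shows "f s = f' s \<and> g s = g' s"
proof -
  have coeff: "f s $ 0 = b s $ 0" "f s $ Suc n = b s $ Suc n + V s * (\<Sum>t=s..k. g t $ n)"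
    "f' s $ 0 = b s $ 0" "f' s $ Suc n = b s $ Suc n + V s * (\<Sum>t=s..k. g' t $ n)"
    "g s $ 0 = 0" "g s $ Suc n = A s * (\<Sum>u=1..s. f u $ n)"
    "g' s $ 0 = 0" "g' s $ Suc n = A s * (\<Sum>u=1..s. f' u $ n)"
    if "s \<in> {1..k}" for s n
    unfolding f[OF that] g[OF that] f'[OF that] g'[OF that]
    by (simp_all add: mult.assoc fps_sum_nth)
  have "\<forall>s \<in> {1..k}. f s $ n = f' s $ n \<and> g s $ n = g' s $ n" for n
    by (induction n) (simp_all add: coeff)
  with s show ?thesis by (simp add: fps_eq_iff)
qed

theorem theorem28:
  fixes A V :: "nat \<Rightarrow> 'a::comm_ring_1" and k r s :: nat
  assumes "1 \<le> r" "r \<le> k" "1 \<le> s" "s \<le> k"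
  shows
   "Abs_fps (\<lambda>m. if even m then GF (altseq k (m + 1) r s) (wAV A V) else 0)
      * fps_of_poly (Qp A V (2*k)) =
    fps_of_poly
     (if r < s then
        smult ((-1)^(r+s+1) * V r * V s) ([:0,1:] * Qp A V (2*r-2) * QTR (s-1) (k-s+1) A V (2*k+1-2*s))
      else if r = s then
        smult (V r) (Qp A V (2*k))
          - smult ((V r)^2) ([:0,1:] * Qp A V (2*r-2) * QTR (r-1) (k-r+1) A V (2*k+1-2*r))
      else
        smult ((-1)^(r+s+1) * V r * V s) ([:0,1:] * Qp A V (2*s-2) * QTR (r-1) (k-r+1) A V (2*k+1-2*r)))
   \<and>
   Abs_fps (\<lambda>m. if odd m then GF (altseq k (m + 1) r s) (wAV A V) else 0)
      * fps_of_poly (Qp A V (2*k)) =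
    fps_of_poly
     (if r \<le> s then
        smult ((-1)^(r+s+1) * V r * A s) ([:0,1:] * Qp A V (2*r-2) * QT s A V (2*k-2*s))
      else
        smult ((-1)^(r+s+1) * V r * A s) ([:0,1:] * Qp A V (2*s-1) * QTR (r-1) (k-r+1) A V (2*k+1-2*r)))"
proof -
  have r: "r \<in> {1..k}" using assms by simp
  define D where "D = fps_of_poly (Qp A V (2*k))"
  have "odd_length_series k r A V s * D = fps_of_poly (odd_numerator A V k r s) \<and>
      even_length_series k r A V s * D = fps_of_poly (even_numerator A V k r s)"
  proof (rule fps_system_unique[where b = "\<lambda>s. fps_const (if r = s then V r else 0) * D"])
    fix t assume t: "t \<in> {1..k}"
    show "even_length_series k r A V t * D =
        fps_X * fps_const (A t) * (\<Sum>u=1..t. odd_length_series k r A V u * D)"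
      unfolding even_length_series_system[OF t] sum_distrib_right[symmetric] by (simp only: mult.assoc)
    show "fps_of_poly (even_numerator A V k r t) =
        fps_X * fps_const (A t) * (\<Sum>u=1..t. fps_of_poly (odd_numerator A V k r u))"
      using even_numerator_system[OF assms(1,2) t] .
  next
    fix u assume u: "u \<in> {1..k}"
    show "odd_length_series k r A V u * D = fps_const (if r = u then V r else 0) * D +
        fps_X * fps_const (V u) * (\<Sum>t=u..k. even_length_series k r A V t * D)"
      unfolding odd_length_series_system[OF r u] sum_distrib_right[symmetric]
      by (simp only: mult.assoc distrib_right)
    show "fps_of_poly (odd_numerator A V k r u) = fps_const (if r = u then V r else 0) * D +
        fps_X * fps_const (V u) * (\<Sum>t=u..k. fps_of_poly (even_numerator A V k r t))"
      using odd_numerator_system[OF assms(1,2) u] by (simp only: D_def)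
  qed (use assms in simp)
  then show ?thesis
    by (simp add: D_def odd_length_series_def even_length_series_def odd_numerator_def
        even_numerator_def)
qed

end
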